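(* Let $G=(V,E)$ be a finite graph without loops and $e=uv\in E$. Let $G/e$ denote the contraction of $e$: the vertices $u$ and $v$ are replaced by a single new vertex $w$, and the edges incident to $w$ are exactly the edges other than $e$ that were incident with $u$ or $v$ (so $G/e$ has one edge fewer than $G$). Then $$\gamma_{coe}(G)-2\leq \gamma_{coe}(G/e)\leq \gamma_{coe}(G).$$
   Context: Graphs have no loops. For a graph $G=(V,E)$ and $x\in V$, $\deg(x)$ is the number of edges incident to $x$. A set $D\subseteq V$ is a dominating set if every vertex of $V\setminus D$ is adjacent to at least one vertex of $D$. A dominating set $D$ is a co-even dominating set if $\deg(x)$ is even for every $x\in V\setminus D$ (degrees taken in the graph under consideration). The co-even domination number $\gamma_{coe}(G)$ is the minimum cardinality of a co-even dominating set of $G$. *)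

theory Defs
  imports Main
begin

(* A finite loopless multigraph: vertex set V, edge set E, and an incidence map
   ends assigning to every edge its set of two distinct endpoints. *)
definition loopless_graph :: "'v set \<Rightarrow> 'e set \<Rightarrow> ('e \<Rightarrow> 'v set) \<Rightarrow> bool" where
  "loopless_graph V E ends \<longleftrightarrow> finite V \<and> finite E \<and>
     (\<forall>a\<in>E. ends a \<subseteq> V \<and> card (ends a) = 2)"

definition deg :: "'e set \<Rightarrow> ('e \<Rightarrow> 'v set) \<Rightarrow> 'v \<Rightarrow> nat" where
  "deg E ends x = card {a\<in>E. x \<in> ends a}"

definition adjacent :: "'e set \<Rightarrow> ('e \<Rightarrow> 'v set) \<Rightarrow> 'v \<Rightarrow> 'v \<Rightarrow> bool" where
  "adjacent E ends x y \<longleftrightarrow> (\<exists>a\<in>E. ends a = {x, y} \<and> x \<noteq> y)"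

definition dominating_set :: "'v set \<Rightarrow> 'e set \<Rightarrow> ('e \<Rightarrow> 'v set) \<Rightarrow> 'v set \<Rightarrow> bool" where
  "dominating_set V E ends D \<longleftrightarrow> D \<subseteq> V \<and>
     (\<forall>x\<in>V - D. \<exists>y\<in>D. adjacent E ends x y)"

definition coeven_dominating_set :: "'v set \<Rightarrow> 'e set \<Rightarrow> ('e \<Rightarrow> 'v set) \<Rightarrow> 'v set \<Rightarrow> bool" where
  "coeven_dominating_set V E ends D \<longleftrightarrow> dominating_set V E ends D \<and>
     (\<forall>x\<in>V - D. even (deg E ends x))"

(* minimum cardinality of a co-even dominating set (V itself is one, so the set is nonempty) *)
definition gamma_coe :: "'v set \<Rightarrow> 'e set \<Rightarrow> ('e \<Rightarrow> 'v set) \<Rightarrow> nat" where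
  "gamma_coe V E ends = Min (card ` {D. coeven_dominating_set V E ends D})"

(* Contraction of edge e with endpoints u, v into the vertex w
   (w is either fresh or one of u, v). *)
definition merge_vertex :: "'v \<Rightarrow> 'v \<Rightarrow> 'v \<Rightarrow> 'v \<Rightarrow> 'v" where
  "merge_vertex u v w x = (if x = u \<or> x = v then w else x)"

definition contract_V :: "'v set \<Rightarrow> 'v \<Rightarrow> 'v \<Rightarrow> 'v \<Rightarrow> 'v set" where
  "contract_V V u v w = merge_vertex u v w ` V"

definition contract_E :: "'e set \<Rightarrow> 'e \<Rightarrow> 'e set" where
  "contract_E E e = E - {e}"

definition contract_ends :: "('e \<Rightarrow> 'v set) \<Rightarrow> 'v \<Rightarrow> 'v \<Rightarrow> 'v \<Rightarrow> 'e \<Rightarrow> 'v set" where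
  "contract_ends ends u v w a = merge_vertex u v w ` ends a"

end

theory Submission
  imports Defs
begin

text \<open>A minimum co-even dominating set of \<open>G\<close> is mapped by the contraction onto a co-even
  dominating set of \<open>G/e\<close>: the merged vertex \<open>w\<close> has degree \<open>deg u + deg v - 2\<close>, so it is even
  whenever \<open>u\<close> and \<open>v\<close> are both outside the set. Conversely, replacing \<open>w\<close> by \<open>u\<close> and \<open>v\<close> in a
  co-even dominating set of \<open>G/e\<close> gives one of \<open>G\<close> with at most two more vertices, since every
  edge at \<open>w\<close> in \<open>G/e\<close> comes from an edge at \<open>u\<close> or at \<open>v\<close>.\<close>

lemma coeven_dominating_set_subset:
  "coeven_dominating_set V E ends D \<Longrightarrow> D \<subseteq> V"
  by (simp add: coeven_dominating_set_def dominating_set_def)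

lemma coeven_dominating_set_whole: "coeven_dominating_set V E ends V"
  by (simp add: coeven_dominating_set_def dominating_set_def)

lemma finite_coeven_dominating_sets:
  "finite V \<Longrightarrow> finite {D. coeven_dominating_set V E ends D}"
  by (rule finite_subset[of _ "Pow V"]) (auto dest: coeven_dominating_set_subset)

lemma gamma_coe_le_card:
  assumes "finite V" "coeven_dominating_set V E ends D"
  shows "gamma_coe V E ends \<le> card D"
  unfolding gamma_coe_def using assms finite_coeven_dominating_sets[OF assms(1)]
  by (intro Min_le) auto

lemma gamma_coe_attained:
  assumes "finite V"
  obtains D where "coeven_dominating_set V E ends D" "card D = gamma_coe V E ends"
proof -
  have "card V \<in> card ` {D. coeven_dominating_set V E ends D}"
    using coeven_dominating_set_whole by blast
  then have "gamma_coe V E ends \<in> card ` {D. coeven_dominating_set V E ends D}"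
    unfolding gamma_coe_def using finite_coeven_dominating_sets[OF assms]
    by (intro Min_in) auto
  then show ?thesis using that by auto
qed

lemma gamma_coe_le_by_transfer:
  assumes "finite V" "finite V2"
    and transfer: "\<And>D. coeven_dominating_set V E ends D \<Longrightarrow>
      \<exists>D2. coeven_dominating_set V2 E2 ends2 D2 \<and> card D2 \<le> card D + k"
  shows "gamma_coe V2 E2 ends2 \<le> gamma_coe V E ends + k"
proof -
  obtain D where D: "coeven_dominating_set V E ends D" "card D = gamma_coe V E ends"
    using gamma_coe_attained[OF assms(1)] .
  then obtain D2 where "coeven_dominating_set V2 E2 ends2 D2" "card D2 \<le> card D + k"
    using transfer by blast
  with D(2) gamma_coe_le_card[OF assms(2)] show ?thesis by fastforce
qed

locale edge_contraction =
  fixes V :: "'v set" and E :: "'e set" and ends :: "'e \<Rightarrow> 'v set"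
    and e :: 'e and u v w :: 'v
  assumes graph: "loopless_graph V E ends"
    and e_in_E: "e \<in> E" and ends_e: "ends e = {u, v}"
    and w_fresh: "w \<notin> V - {u, v}"
    and no_parallel: "\<And>a. a \<in> E \<Longrightarrow> a \<noteq> e \<Longrightarrow> \<not> {u, v} \<subseteq> ends a"
begin

abbreviation "merge \<equiv> merge_vertex u v w"
abbreviation "V' \<equiv> contract_V V u v w"
abbreviation "E' \<equiv> contract_E E e"
abbreviation "ends' \<equiv> contract_ends ends u v w"

lemma finite_V: "finite V" and ends_subset: "a \<in> E \<Longrightarrow> ends a \<subseteq> V"
  and card_ends: "a \<in> E \<Longrightarrow> card (ends a) = 2"
  using graph by (auto simp: loopless_graph_def)

lemma u_in_V: "u \<in> V" and v_in_V: "v \<in> V"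
  using ends_subset[OF e_in_E] ends_e by auto

lemma finite_V': "finite V'"
  using finite_V by (simp add: contract_V_def)

lemma merge_eq_w_iff: "z \<in> V \<Longrightarrow> merge z = w \<longleftrightarrow> z = u \<or> z = v"
  using w_fresh by (auto simp: merge_vertex_def)

lemma merge_eq_iff: "z \<in> V \<Longrightarrow> x \<in> V - {u, v} \<Longrightarrow> merge z = x \<longleftrightarrow> z = x"
  using w_fresh by (auto simp: merge_vertex_def)

lemma merge_other: "x \<notin> {u, v} \<Longrightarrow> merge x = x"
  by (simp add: merge_vertex_def)

lemma mem_V'_iff: "x \<in> V' \<longleftrightarrow> x = w \<or> x \<in> V - {u, v}"
  using u_in_V by (auto simp: contract_V_def merge_vertex_def)

lemma deg_contract_other:
  assumes x: "x \<in> V - {u, v}"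
  shows "deg E' ends' x = deg E ends x"
proof -
  have "x \<in> ends' a \<longleftrightarrow> x \<in> ends a" if "a \<in> E" for a
  proof -
    have "x \<in> ends' a \<longleftrightarrow> (\<exists>z\<in>ends a. merge z = x)"
      unfolding contract_ends_def by blast
    also have "\<dots> \<longleftrightarrow> (\<exists>z\<in>ends a. z = x)"
      using merge_eq_iff[OF subsetD[OF ends_subset[OF that]] x] by blast
    finally show ?thesis by simp
  qed
  then have "{a \<in> E'. x \<in> ends' a} = {a \<in> E. x \<in> ends a}"
    using x ends_e by (auto simp: contract_E_def)
  then show ?thesis by (simp add: deg_def)
qed

text \<open>An edge other than \<open>e\<close> joining \<open>u\<close> and \<open>v\<close> would be counted twice on the right but
  only once on the left; this is why \<open>G/e\<close> must be loopless.\<close>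

lemma deg_contract_merged: "deg E' ends' w + 2 = deg E ends u + deg E ends v"
proof -
  let ?A = "{a \<in> E. u \<in> ends a}" and ?B = "{a \<in> E. v \<in> ends a}"
  have "finite E" using graph by (simp add: loopless_graph_def)
  then have fin: "finite ?A" "finite ?B" by auto
  have e_in: "e \<in> ?A" "e \<in> ?B" using e_in_E ends_e by auto
  have "w \<in> ends' a \<longleftrightarrow> u \<in> ends a \<or> v \<in> ends a" if "a \<in> E" for a
  proof -
    have "w \<in> ends' a \<longleftrightarrow> (\<exists>z\<in>ends a. merge z = w)"
      by (metis contract_ends_def image_iff)
    also have "\<dots> \<longleftrightarrow> (\<exists>z\<in>ends a. z = u \<or> z = v)"
      using merge_eq_w_iff ends_subset[OF that] by blast
    finally show ?thesis by blast
  qed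
  then have "{a \<in> E'. w \<in> ends' a} = (?A - {e}) \<union> (?B - {e})"
    by (auto simp: contract_E_def)
  moreover have "(?A - {e}) \<inter> (?B - {e}) = {}" using no_parallel by auto
  ultimately have "deg E' ends' w = card (?A - {e}) + card (?B - {e})"
    using fin by (simp add: deg_def card_Un_disjoint)
  moreover have "card ?A > 0" "card ?B > 0" using fin e_in by (auto simp: card_gt_0_iff)
  ultimately show ?thesis using fin e_in by (simp add: deg_def card_Diff_singleton)
qed

lemma adjacent_contract:
  assumes "adjacent E ends x y" "merge x \<noteq> merge y"
  shows "adjacent E' ends' (merge x) (merge y)"
proof -
  obtain a where a: "a \<in> E" "ends a = {x, y}"
    using assms(1) by (auto simp: adjacent_def)
  have "a \<noteq> e"
    using a(2) ends_e assms(2) by (auto simp: doubleton_eq_iff merge_vertex_def)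
  then show ?thesis
    using a assms(2) by (auto simp: adjacent_def contract_E_def contract_ends_def)
qed

lemma adjacent_expand:
  assumes "adjacent E' ends' x y" "x \<in> V - {u, v}"
  obtains z where "z \<in> V" "merge z = y" "adjacent E ends x z"
proof -
  obtain a where a: "a \<in> E" "a \<noteq> e" "merge ` ends a = {x, y}" "x \<noteq> y"
    using assms(1) by (auto simp: adjacent_def contract_E_def contract_ends_def)
  obtain p q where pq: "ends a = {p, q}" "p \<noteq> q"
    using card_ends[OF a(1)] by (auto simp: card_2_iff)
  have pq_V: "p \<in> V" "q \<in> V" using ends_subset[OF a(1)] pq(1) by auto
  have "{merge p, merge q} = {x, y}" using a(3) pq(1) by simp
  with a(4) consider "merge p = x" "merge q = y" | "merge q = x" "merge p = y"
    by (auto simp: doubleton_eq_iff)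
  then show ?thesis
  proof cases
    case 1
    then show ?thesis using that[of q] pq_V a(1) pq merge_eq_iff[OF pq_V(1) assms(2)]
      by (auto simp: adjacent_def)
  next
    case 2
    then show ?thesis using that[of p] pq_V a(1) pq merge_eq_iff[OF pq_V(2) assms(2)]
      by (auto simp: adjacent_def insert_commute)
  qed
qed

lemma coeven_dominating_contract:
  assumes D: "coeven_dominating_set V E ends D"
  shows "coeven_dominating_set V' E' ends' (merge ` D)"
  unfolding coeven_dominating_set_def dominating_set_def
proof (intro conjI ballI)
  show "merge ` D \<subseteq> V'"
    using coeven_dominating_set_subset[OF D] by (auto simp: contract_V_def)
  fix x' assume x': "x' \<in> V' - merge ` D"
  then obtain x where x: "x \<in> V" "x' = merge x" by (auto simp: contract_V_def)
  with x' have "x \<in> V - D" by auto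
  then obtain y where y: "y \<in> D" "adjacent E ends x y"
    using D unfolding coeven_dominating_set_def dominating_set_def by blast
  with x x' have "merge x \<noteq> merge y" by auto
  with x y show "\<exists>y'\<in>merge ` D. adjacent E' ends' x' y'"
    by (auto dest: adjacent_contract)
  show "even (deg E' ends' x')"
  proof (cases "x' = w")
    case True
    with x' have "u \<in> V - D" "v \<in> V - D"
      using u_in_V v_in_V by (auto simp: merge_vertex_def image_iff)
    then have "even (deg E ends u + deg E ends v)"
      using D by (simp add: coeven_dominating_set_def)
    then show ?thesis using True deg_contract_merged by (metis even_add even_numeral)
  next
    case False
    with x' have "x' \<in> V - {u, v}" "x' \<notin> D"
      by (auto simp: mem_V'_iff merge_other image_iff)
    then show ?thesis
      using D deg_contract_other by (simp add: coeven_dominating_set_def)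
  qed
qed

lemma coeven_dominating_expand:
  assumes D': "coeven_dominating_set V' E' ends' D'"
  shows "coeven_dominating_set V E ends (D' - {w} \<union> {u, v})" (is "coeven_dominating_set _ _ _ ?D")
  unfolding coeven_dominating_set_def dominating_set_def
proof (intro conjI ballI)
  show "?D \<subseteq> V"
    using coeven_dominating_set_subset[OF D'] u_in_V v_in_V by (auto simp: mem_V'_iff)
  fix x assume "x \<in> V - ?D"
  with w_fresh have x: "x \<in> V - {u, v}" "x \<in> V' - D'" by (auto simp: mem_V'_iff)
  then have "even (deg E' ends' x)"
    using D' unfolding coeven_dominating_set_def by blast
  then show "even (deg E ends x)" using deg_contract_other[OF x(1)] by simp
  obtain y where "y \<in> D'" "adjacent E' ends' x y"
    using D' x(2) unfolding coeven_dominating_set_def dominating_set_def by blast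
  then obtain z where z: "z \<in> V" "merge z \<in> D'" "adjacent E ends x z"
    using adjacent_expand x(1) by metis
  have "z \<in> ?D"
    using z(1,2) w_fresh by (cases "z \<in> {u, v}") (auto simp: merge_other)
  with z(3) show "\<exists>y\<in>?D. adjacent E ends x y" by blast
qed

lemma gamma_coe_contract_le: "gamma_coe V' E' ends' \<le> gamma_coe V E ends"
proof -
  have "gamma_coe V' E' ends' \<le> gamma_coe V E ends + 0"
  proof (rule gamma_coe_le_by_transfer[OF finite_V finite_V'])
    fix D assume D: "coeven_dominating_set V E ends D"
    have "card (merge ` D) \<le> card D"
      using card_image_le finite_subset[OF coeven_dominating_set_subset[OF D] finite_V] by blast
    with coeven_dominating_contract[OF D]
    show "\<exists>D2. coeven_dominating_set V' E' ends' D2 \<and> card D2 \<le> card D + 0" by auto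
  qed
  then show ?thesis by simp
qed

lemma gamma_coe_le_contract_add_2: "gamma_coe V E ends \<le> gamma_coe V' E' ends' + 2"
proof (rule gamma_coe_le_by_transfer[OF finite_V' finite_V])
  fix D' assume D': "coeven_dominating_set V' E' ends' D'"
  have "card (D' - {w} \<union> {u, v}) \<le> card (D' - {w}) + card {u, v}"
    by (rule card_Un_le)
  also have "\<dots> \<le> card D' + 2"
    using card_Diff1_le[of D' w] by (simp add: card_insert_if)
  finally have "card (D' - {w} \<union> {u, v}) \<le> card D' + 2" .
  with coeven_dominating_expand[OF D']
  show "\<exists>D. coeven_dominating_set V E ends D \<and> card D \<le> card D' + 2" by blast
qed

end

lemma contract_loopless_no_parallel:
  assumes G: "loopless_graph V E ends" and "u \<noteq> v"
    and contract: "loopless_graph (contract_V V u v w) (contract_E E e) (contract_ends ends u v w)"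
    and a: "a \<in> E" "a \<noteq> e"
  shows "\<not> {u, v} \<subseteq> ends a"
proof
  assume uv: "{u, v} \<subseteq> ends a"
  have "card (ends a) = 2" using G a(1) by (simp add: loopless_graph_def)
  with uv \<open>u \<noteq> v\<close> have "ends a = {u, v}"
    by (metis card_2_iff card_subset_eq finite.emptyI finite.insertI)
  then have "contract_ends ends u v w a = {w}"
    by (simp add: contract_ends_def merge_vertex_def)
  moreover have "card (contract_ends ends u v w a) = 2"
    using contract a by (simp add: loopless_graph_def contract_E_def)
  ultimately show False by simp
qed

theorem mainTheorem6:
  fixes V :: "'v set" and E :: "'e set" and ends :: "'e \<Rightarrow> 'v set"
    and e :: 'e and u v w :: 'v
  assumes G: "loopless_graph V E ends"
    and e: "e \<in> E" "ends e = {u, v}"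
    and w: "w \<notin> V - {u, v}"
    and noloop: "loopless_graph (contract_V V u v w) (contract_E E e) (contract_ends ends u v w)"
  shows "int (gamma_coe V E ends) - 2
           \<le> int (gamma_coe (contract_V V u v w) (contract_E E e) (contract_ends ends u v w))
       \<and> gamma_coe (contract_V V u v w) (contract_E E e) (contract_ends ends u v w)
           \<le> gamma_coe V E ends"
proof -
  have "u \<noteq> v" using G e by (auto simp: loopless_graph_def)
  then interpret edge_contraction V E ends e u v w
    using G e w contract_loopless_no_parallel[OF G _ noloop] by unfold_locales auto
  show ?thesis using gamma_coe_contract_le gamma_coe_le_contract_add_2 by linarith
qed

end
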